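(* Let $n$ be an even perfect square. Then $D_{S(n)^*}=C_{S(n)^*}=4$.
   Context: For a natural number $n$, $\mathbb Z_n=\mathbb Z/n\mathbb Z$, $S(n)=\{x^2:x\in\mathbb Z_n\}$, $S(n)^*=S(n)\setminus\{0\}$. For $A\subseteq\mathbb Z_n$, a sequence $(y_1,\dots,y_t)$ ($t\ge1$) in $\mathbb Z_n$ is an $A$-weighted zero-sum sequence if there exist $a_1,\dots,a_t\in A$ with $\sum a_iy_i=0$; a sequence has an $A$-weighted zero-sum subsequence if some nonempty subsequence is an $A$-weighted zero-sum sequence. $D_A(n)$ is the least positive integer $t$ such that every sequence of length $t$ in $\mathbb Z_n$ has an $A$-weighted zero-sum subsequence; $C_A(n)$ is the least positive integer $t$ such that every sequence of length $t$ in $\mathbb Z_n$ has an $A$-weighted zero-sum subsequence consisting of consecutive terms. $D_{S(n)^*}=D_{S(n)^*}(n)$, $C_{S(n)^*}=C_{S(n)^*}(n)$. *)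

theory Defs
  imports Main
begin

(* Z_n is represented by the residues {0..<n} (as integers), arithmetic taken mod n. *)

definition sq_set :: "nat \<Rightarrow> int set" where
  "sq_set n = {(x^2) mod int n | x. x \<in> {0..<int n}}"

definition sq_set_star :: "nat \<Rightarrow> int set" where
  "sq_set_star n = sq_set n - {0}"

definition weighted_zero_sum :: "nat \<Rightarrow> int set \<Rightarrow> (nat \<Rightarrow> int) \<Rightarrow> nat set \<Rightarrow> bool" where
  "weighted_zero_sum n A y I \<longleftrightarrow>
     (\<exists>a. (\<forall>i\<in>I. a i \<in> A) \<and> (\<Sum>i\<in>I. a i * y i) mod int n = 0)"

definition D_const :: "int set \<Rightarrow> nat \<Rightarrow> nat" where
  "D_const A n = (LEAST t. t > 0 \<and>
     (\<forall>y. (\<forall>i<t. y i \<in> {0..<int n}) \<longrightarrow>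
        (\<exists>I. I \<subseteq> {..<t} \<and> I \<noteq> {} \<and> weighted_zero_sum n A y I)))"

definition C_const :: "int set \<Rightarrow> nat \<Rightarrow> nat" where
  "C_const A n = (LEAST t. t > 0 \<and>
     (\<forall>y. (\<forall>i<t. y i \<in> {0..<int n}) \<longrightarrow>
        (\<exists>i j. i < j \<and> j \<le> t \<and> weighted_zero_sum n A y {i..<j})))"

end

theory Submission
  imports Defs "HOL-Number_Theory.Number_Theory"
begin

text \<open>
  Upper bound: if \<open>n = m\<^sup>2\<close> with \<open>m\<close> even, then \<open>w = (m/2)\<^sup>2\<close> is a nonzero square
  with \<open>4 w = n\<close>. Among any four terms some block of consecutive terms has sum divisible
  by 4 (pigeonhole on the five prefix sums mod 4), and weighting that block by \<open>w\<close> gives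
  a zero sum mod \<open>n\<close>.

  Lower bound: a sequence \<open>(Y\<^sub>0, Y\<^sub>1, Y\<^sub>2)\<close> has no weighted zero-sum subsequence as
  soon as \<open>\<Sum> Y\<^sub>i x\<^sub>i\<^sup>2 \<equiv> 0 (mod m\<^sup>2)\<close> forces \<open>m\<close> to divide every \<open>x\<^sub>i\<close>, because then
  every weight \<open>x\<^sub>i\<^sup>2\<close> vanishes mod \<open>n\<close>. By descent this only has to be checked modulo
  \<open>p\<^sup>2\<close> for the primes \<open>p | m\<close>: for \<open>p = 2\<close> it follows from \<open>Y\<^sub>i \<equiv> 1 (mod 4)\<close>, for odd
  \<open>p\<close> from \<open>Y\<^sub>0 \<equiv> 1\<close>, \<open>Y\<^sub>1 \<equiv> -g\<close> with \<open>g\<close> a non-residue, and \<open>Y\<^sub>2 \<equiv> p (mod p\<^sup>2)\<close>.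
  The Chinese remainder theorem provides such coefficients.
\<close>

lemma exists_quadratic_nonresidue:
  fixes p :: int
  assumes "prime p" "p \<noteq> 2"
  shows "\<exists>g. \<not> QuadRes p g"
proof -
  have p3: "p \<ge> 3" using prime_ge_2_int[OF assms(1)] assms(2) by linarith
  define f where "f x = x^2 mod p" for x
  let ?A = "{1..p - 1}"
  have f_into: "f x \<in> ?A" if "x \<in> ?A" for x
  proof -
    have "\<not> p dvd x" using that zdvd_not_zless by auto
    then have "\<not> p dvd x^2" using assms(1) prime_dvd_power by blast
    then have "x^2 mod p \<noteq> 0" by (simp add: dvd_eq_mod_eq_0)
    moreover have "0 \<le> x^2 mod p" "x^2 mod p < p" using p3 by simp_all
    ultimately show ?thesis unfolding f_def by simp
  qed
  have "(p - 1)^2 = 1 + p * (p - 2)" by (simp add: power2_eq_square algebra_simps)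
  then have "f 1 = f (p - 1)" unfolding f_def by simp
  then have "\<not> inj_on f ?A" using p3 unfolding inj_on_def by fastforce
  then have "f ` ?A \<noteq> ?A" using eq_card_imp_inj_on[of ?A f] by auto
  then obtain g where g: "g \<in> ?A" "g \<notin> f ` ?A" using f_into by blast
  have "\<not> [y^2 = g] (mod p)" for y
  proof
    assume y: "[y^2 = g] (mod p)"
    then have fy: "f (y mod p) = g"
      using g(1) unfolding f_def cong_def by (simp add: power_mod)
    have "y mod p \<noteq> 0"
      using y g(1) by (auto simp: cong_def power2_eq_square dvd_eq_mod_eq_0 [symmetric])
    moreover have "0 \<le> y mod p" "y mod p < p" using p3 by simp_all
    ultimately have "y mod p \<in> ?A" by simp
    then show False using fy g(2) by blast
  qed
  then show ?thesis unfolding QuadRes_def by blast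
qed

definition diag_form :: "(nat \<Rightarrow> int) \<Rightarrow> nat \<Rightarrow> (nat \<Rightarrow> int) \<Rightarrow> int" where
  "diag_form Y k x = (\<Sum>i<k. Y i * (x i)^2)"

definition anisotropic_mod :: "(nat \<Rightarrow> int) \<Rightarrow> nat \<Rightarrow> int \<Rightarrow> bool" where
  "anisotropic_mod Y k d \<longleftrightarrow> (\<forall>x. d^2 dvd diag_form Y k x \<longrightarrow> (\<forall>i<k. d dvd x i))"

lemma diag_form_scale:
  assumes "\<And>i. i < k \<Longrightarrow> x i = c * z i"
  shows "diag_form Y k x = c^2 * diag_form Y k z"
  unfolding diag_form_def sum_distrib_left
  by (rule sum.cong) (simp_all add: assms power_mult_distrib)

lemma anisotropic_mod_one: "anisotropic_mod Y k 1"
  by (simp add: anisotropic_mod_def)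

lemma anisotropic_mod_mult:
  assumes a: "anisotropic_mod Y k a" and b: "anisotropic_mod Y k b"
  shows "anisotropic_mod Y k (a * b)"
  unfolding anisotropic_mod_def
proof (intro allI impI)
  fix x i
  assume dvd_ab: "(a * b)^2 dvd diag_form Y k x" and i: "i < k"
  have "a^2 dvd diag_form Y k x"
    using dvd_ab by (metis dvd_mult_left power_mult_distrib)
  then have a_dvd: "\<forall>j<k. a dvd x j" using a unfolding anisotropic_mod_def by blast
  show "a * b dvd x i"
  proof (cases "a = 0")
    case True
    then show ?thesis using a_dvd i by simp
  next
    case False
    define z where "z j = x j div a" for j
    have x_eq: "x j = a * z j" if "j < k" for j
      using a_dvd that unfolding z_def by simp
    then have "(a * b)^2 dvd a^2 * diag_form Y k z"
      using dvd_ab diag_form_scale[of k x a z Y] by simp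
    then have "b^2 dvd diag_form Y k z"
      using False by (simp add: power_mult_distrib)
    then have "b dvd z i" using b i unfolding anisotropic_mod_def by blast
    then show ?thesis using x_eq[OF i] by simp
  qed
qed

lemma anisotropic_mod_of_prime_divisors:
  assumes "m > 0" "\<And>p. prime p \<Longrightarrow> p dvd m \<Longrightarrow> anisotropic_mod Y k (int p)"
  shows "anisotropic_mod Y k (int m)"
  using assms
proof (induction m rule: prime_divisors_induct)
  case (factor p m)
  then have "anisotropic_mod Y k (int p)" "anisotropic_mod Y k (int m)" by simp_all
  then show ?case using anisotropic_mod_mult by fastforce
qed (simp_all add: anisotropic_mod_one)

lemma square_mod_4:
  fixes c x :: int
  assumes "c mod 4 = 1"
  shows "[c * x^2 = of_bool (odd x)] (mod 4)"
proof (cases "even x")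
  case True
  then obtain a where "x = 2 * a" by blast
  then show ?thesis by (simp add: cong_def power2_eq_square)
next
  case False
  then obtain a where a: "x = 2 * a + 1" by (metis oddE)
  have "c * x^2 = 4 * (c * (a^2 + a)) + c" unfolding a by (simp add: power2_eq_square algebra_simps)
  then show ?thesis using False assms by (simp add: cong_def)
qed

lemma anisotropic_mod_2:
  assumes "k \<le> 3" "\<And>i. i < k \<Longrightarrow> Y i mod 4 = 1"
  shows "anisotropic_mod Y k 2"
  unfolding anisotropic_mod_def
proof (intro allI impI)
  fix x i
  assume "2^2 dvd diag_form Y k x" and "i < k"
  moreover have "[diag_form Y k x = (\<Sum>i<k. of_bool (odd (x i)))] (mod 4)"
    unfolding diag_form_def by (rule cong_sum) (simp add: assms(2) square_mod_4)
  ultimately have "4 dvd int (card ({..<k} \<inter> {i. odd (x i)}))"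
    by (simp add: cong_dvd_iff)
  moreover have "card ({..<k} \<inter> {i. odd (x i)}) \<le> 3"
    using assms(1) card_mono[of "{..<k}" "{..<k} \<inter> {i. odd (x i)}"] by auto
  ultimately have "card ({..<k} \<inter> {i. odd (x i)}) = 0" by presburger
  then have "{..<k} \<inter> {i. odd (x i)} = {}" by simp
  then show "2 dvd x i" using \<open>i < k\<close> by auto
qed

lemma nonresidue_binary_form:
  fixes q g x y :: int
  assumes q: "prime q" and g: "\<not> QuadRes q g" and xy: "[x^2 = g * y^2] (mod q)"
  shows "q dvd x \<and> q dvd y"
proof (cases "q dvd y")
  case True
  then have "[g * y^2 = 0] (mod q)" by (simp add: cong_0_iff power2_eq_square)
  then have "q dvd x^2" using xy cong_0_iff cong_trans by blast
  then show ?thesis using True q prime_dvd_power by blast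
next
  case False
  then have "coprime y q" using q by (simp add: prime_imp_coprime coprime_commute)
  then obtain w where w: "[y * w = 1] (mod q)" using cong_solve_coprime_int by blast
  have "[(x * w)^2 = g * (y * w)^2] (mod q)"
    using cong_mult[OF xy cong_refl[of "w^2"]] by (simp add: power_mult_distrib ac_simps)
  moreover have "[g * (y * w)^2 = g] (mod q)"
    using cong_mult[OF cong_refl[of g] cong_pow[OF w, of 2]] by simp
  ultimately have "[(x * w)^2 = g] (mod q)" by (rule cong_trans)
  then show ?thesis using g unfolding QuadRes_def by blast
qed

lemma diag_form_3: "diag_form Y 3 x = Y 0 * (x 0)^2 + Y 1 * (x 1)^2 + Y 2 * (x 2)^2"
  by (simp add: diag_form_def numeral_3_eq_3 numeral_2_eq_2 lessThan_Suc)

lemma anisotropic_mod_odd_prime: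
  fixes q g :: int
  assumes q: "prime q" and g: "\<not> QuadRes q g"
    and Y0: "[Y 0 = 1] (mod q)" and Y1: "[Y 1 = - g] (mod q)" and Y2: "[Y 2 = q] (mod q^2)"
  shows "anisotropic_mod Y 3 q"
  unfolding anisotropic_mod_def
proof (intro allI impI)
  fix x i
  assume dvd: "q^2 dvd diag_form Y 3 x" and i: "i < (3::nat)"
  have "[Y 2 = 0] (mod q)"
    using cong_dvd_iff[OF cong_dvd_modulus[OF Y2, of q]] by (simp add: cong_0_iff)
  then have "[diag_form Y 3 x = 1 * (x 0)^2 + (- g) * (x 1)^2 + 0 * (x 2)^2] (mod q)"
    unfolding diag_form_3 using Y0 Y1 by (intro cong_add cong_mult cong_refl)
  moreover have "[diag_form Y 3 x = 0] (mod q)"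
    using dvd by (simp add: cong_0_iff power2_eq_square dvd_mult_left)
  ultimately have "[1 * (x 0)^2 + (- g) * (x 1)^2 + 0 * (x 2)^2 = 0] (mod q)"
    using cong_sym cong_trans by blast
  then have "[(x 0)^2 = g * (x 1)^2] (mod q)"
    by (simp add: cong_iff_dvd_diff cong_0_iff)
  then have dvd01: "q dvd x 0 \<and> q dvd x 1" using nonresidue_binary_form q g by blast
  then obtain a0 a1 where "x 0 = q * a0" "x 1 = q * a1" by blast
  then have "diag_form Y 3 x = q^2 * (Y 0 * a0^2 + Y 1 * a1^2) + Y 2 * (x 2)^2"
    unfolding diag_form_3 by (simp add: algebra_simps)
  then have "q^2 dvd Y 2 * (x 2)^2" using dvd by (simp add: dvd_add_right_iff)
  moreover obtain c where "Y 2 = q + q^2 * c" using cong_sym[OF Y2] unfolding cong_iff_lin by blast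
  ultimately have "q * q dvd q * ((1 + q * c) * (x 2)^2)" by (simp add: power2_eq_square algebra_simps)
  then have "q dvd (1 + q * c) * (x 2)^2" using q by simp
  moreover have "\<not> q dvd 1 + q * c"
    using prime_ge_2_int[OF q] by (simp add: dvd_add_left_iff)
  ultimately have "q dvd x 2" using q prime_dvd_mult_iff prime_dvd_power by blast
  with dvd01 i show "q dvd x i" by (auto simp: numeral_3_eq_3 numeral_2_eq_2 less_Suc_eq)
qed

lemma exists_anisotropic_ternary_form:
  assumes "m > 0"
  obtains Y where "anisotropic_mod Y 3 (int m)"
proof -
  define G where "G p = (SOME g. \<not> QuadRes (int p) g)" for p
  have G: "\<not> QuadRes (int p) (G p)" if "prime p" "p \<noteq> 2" for p
    unfolding G_def by (rule someI_ex) (simp add: exists_quadratic_nonresidue that)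
  define A where "A = insert 2 (prime_factors m)"
  have primes: "\<forall>p\<in>A. prime p" unfolding A_def by auto
  have CRT: "\<exists>z. \<forall>p\<in>A. [z = u p] (mod p^2)" for u
  proof (rule chinese_remainder_nat)
    show "finite A" unfolding A_def by simp
    show "\<forall>p\<in>A. \<forall>q\<in>A. p \<noteq> q \<longrightarrow> coprime (p^2) (q^2)"
      using primes by (simp add: primes_coprime)
  qed
  obtain z1 where z1: "\<forall>p\<in>A. [z1 = (if p = 2 then 1 else nat ((- G p) mod int p))] (mod p^2)"
    using CRT by (rule exE)
  obtain z2 where z2: "\<forall>p\<in>A. [z2 = (if p = 2 then 1 else p)] (mod p^2)"
    using CRT by (rule exE)
  define Y where "Y i = (if i = 0 then 1 else if i = 1 then int z1 else int z2)" for i :: nat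
  have "anisotropic_mod Y 3 (int p)" if p: "prime p" "p dvd m" for p
  proof (cases "p = 2")
    case True
    have "[z1 = 1] (mod 4)" "[z2 = 1] (mod 4)" using z1 z2 unfolding A_def by force+
    then have "int z1 mod 4 = 1" "int z2 mod 4 = 1" unfolding cong_def by presburger+
    then have "Y i mod 4 = 1" for i unfolding Y_def by simp
    then show ?thesis using True anisotropic_mod_2[of 3 Y] by simp
  next
    case False
    have "p \<in> A" using p assms unfolding A_def by (simp add: in_prime_factors_iff)
    then have z1p: "[z1 = nat ((- G p) mod int p)] (mod p^2)" and z2p: "[z2 = p] (mod p^2)"
      using z1 z2 False by auto
    have "[z1 = nat ((- G p) mod int p)] (mod p)" using z1p by (rule cong_dvd_modulus_nat) simp
    then have "[int z1 = (- G p) mod int p] (mod int p)"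
      using prime_gt_0_nat[OF p(1)] by (simp flip: cong_int_iff)
    then have "[Y 1 = - G p] (mod int p)" unfolding Y_def by simp
    moreover have "[Y 2 = int p] (mod (int p)^2)"
      using z2p unfolding Y_def by (simp flip: cong_int_iff)
    ultimately show ?thesis
      using anisotropic_mod_odd_prime[of "int p" "G p" Y] p(1) G[OF p(1) False]
      by (simp add: Y_def)
  qed
  then show thesis using that anisotropic_mod_of_prime_divisors[OF assms] by blast
qed

lemma no_weighted_zero_sum_of_anisotropic:
  assumes aniso: "anisotropic_mod Y k (int m)" and n: "n = m^2"
    and I: "I \<subseteq> {..<k}" "I \<noteq> {}"
  shows "\<not> weighted_zero_sum n (sq_set_star n) (\<lambda>i. Y i mod int n) I"
proof
  assume "weighted_zero_sum n (sq_set_star n) (\<lambda>i. Y i mod int n) I"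
  then obtain a where a: "\<forall>i\<in>I. a i \<in> sq_set_star n"
    and zero: "(\<Sum>i\<in>I. a i * (Y i mod int n)) mod int n = 0"
    unfolding weighted_zero_sum_def by auto
  have a_ne: "\<forall>i\<in>I. a i \<noteq> 0" using a unfolding sq_set_star_def by blast
  have "\<forall>i\<in>I. \<exists>x. a i = x^2 mod int n" using a unfolding sq_set_star_def sq_set_def by blast
  then obtain x where x: "\<forall>i\<in>I. a i = (x i)^2 mod int n" by (rule bchoice [THEN exE])
  define z where "z i = (if i \<in> I then x i else 0)" for i
  have "[(\<Sum>i\<in>I. a i * (Y i mod int n)) = (\<Sum>i\<in>I. Y i * (x i)^2)] (mod int n)"
    by (rule cong_sum) (simp add: x cong_def mod_mult_eq mult.commute)
  also have "(\<Sum>i\<in>I. Y i * (x i)^2) = diag_form Y k z"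
    unfolding diag_form_def using I(1)
    by (intro sum.mono_neutral_cong_left) (auto simp: z_def)
  finally have "[diag_form Y k z = 0] (mod int n)" using zero by (simp add: cong_def)
  then have "(int m)^2 dvd diag_form Y k z" using n by (simp add: cong_0_iff)
  then have "\<forall>i<k. int m dvd z i" using aniso unfolding anisotropic_mod_def by blast
  moreover obtain i where i: "i \<in> I" using I(2) by blast
  ultimately have "int m dvd x i" using I(1) unfolding z_def by auto
  then have "int n dvd (x i)^2" using n by simp
  then show False using x a_ne i by (simp add: dvd_eq_mod_eq_0)
qed

lemma exists_consecutive_sum_dvd:
  fixes y :: "nat \<Rightarrow> int"
  assumes "d > 0"
  obtains i j where "i < j" "j \<le> d" "int d dvd (\<Sum>l\<in>{i..<j}. y l)"
proof -
  define P where "P k = (\<Sum>l<k. y l) mod int d" for k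
  have "P ` {..d} \<subseteq> {0..<int d}" using assms unfolding P_def by auto
  then have "card (P ` {..d}) < card {..d}"
    using card_mono[of "{0..<int d}" "P ` {..d}"] by simp
  then obtain a b where "a \<le> d" "b \<le> d" "a \<noteq> b" "P a = P b"
    using pigeonhole unfolding inj_on_def by blast
  then obtain i j where ij: "i < j" "j \<le> d" "P i = P j"
    by (metis linorder_neqE_nat)
  have "(\<Sum>l<i. y l) + (\<Sum>l\<in>{i..<j}. y l) = (\<Sum>l<j. y l)"
    using sum.atLeastLessThan_concat[of 0 i j y] ij(1) by (simp add: atLeast0LessThan)
  then have "int d dvd (\<Sum>l\<in>{i..<j}. y l)"
    using ij(3) unfolding P_def by (metis add_diff_cancel_left' mod_eq_dvd_iff)
  then show thesis using that ij(1,2) by blast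
qed

lemma half_square_in_sq_set_star:
  assumes "even m" "m > 0" "n = m^2"
  shows "int (m div 2)^2 \<in> sq_set_star n" and "4 * int (m div 2)^2 = int n"
proof -
  define h where "h = int (m div 2)"
  have h: "int m = 2 * h" "h > 0" using assms unfolding h_def by auto
  then have quarter: "4 * h^2 = int n" using assms(3) by (simp add: power_mult_distrib)
  then show "4 * int (m div 2)^2 = int n" unfolding h_def .
  have "h \<le> h^2" using h by (simp add: power2_eq_square)
  then have "0 < h" "h < int n" "0 < h^2" "h^2 < int n" using h quarter by simp_all
  then have "h^2 \<in> sq_set_star n"
    unfolding sq_set_star_def sq_set_def by (auto intro!: exI[of _ h])
  then show "int (m div 2)^2 \<in> sq_set_star n" unfolding h_def .
qed

lemma exists_consecutive_weighted_zero_sum: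
  assumes "even m" "m > 0" "n = m^2"
  obtains i j where "i < j" "j \<le> 4" "weighted_zero_sum n (sq_set_star n) y {i..<j}"
proof -
  define w where "w = int (m div 2)^2"
  obtain i j where ij: "i < j" "j \<le> 4" "int 4 dvd (\<Sum>l\<in>{i..<j}. y l)"
    using exists_consecutive_sum_dvd[of 4 y] by auto
  then obtain c where "(\<Sum>l\<in>{i..<j}. y l) = 4 * c" by auto
  then have "(\<Sum>l\<in>{i..<j}. w * y l) = int n * c"
    using half_square_in_sq_set_star(2)[OF assms]
    by (simp add: w_def flip: sum_distrib_left)
  then have "int n dvd (\<Sum>l\<in>{i..<j}. w * y l)" by simp
  then have "weighted_zero_sum n (sq_set_star n) y {i..<j}"
    unfolding weighted_zero_sum_def using half_square_in_sq_set_star(1)[OF assms]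
    by (intro exI[of _ "\<lambda>_. w"]) (simp add: w_def dvd_eq_mod_eq_0)
  then show thesis using that ij by blast
qed

lemma D_const_eqI:
  assumes "t > 0"
    and "\<And>y. \<forall>i<t. y i \<in> {0..<int n} \<Longrightarrow> \<exists>I. I \<subseteq> {..<t} \<and> I \<noteq> {} \<and> weighted_zero_sum n A y I"
    and "\<forall>i<t - 1. y i \<in> {0..<int n}"
    and "\<And>I. I \<subseteq> {..<t - 1} \<Longrightarrow> I \<noteq> {} \<Longrightarrow> \<not> weighted_zero_sum n A y I"
  shows "D_const A n = t"
  unfolding D_const_def
proof (rule Least_equality)
  fix s
  assume s: "0 < s \<and> (\<forall>y. (\<forall>i<s. y i \<in> {0..<int n}) \<longrightarrow>
      (\<exists>I. I \<subseteq> {..<s} \<and> I \<noteq> {} \<and> weighted_zero_sum n A y I))"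
  show "t \<le> s"
  proof (rule ccontr)
    assume "\<not> t \<le> s"
    then have "\<forall>i<s. y i \<in> {0..<int n}" using assms(3) by auto
    then obtain I where I: "I \<subseteq> {..<s}" "I \<noteq> {}" "weighted_zero_sum n A y I"
      using s by blast
    then have "I \<subseteq> {..<t - 1}" using \<open>\<not> t \<le> s\<close> by auto
    then show False using assms(4) I(2,3) by blast
  qed
qed (use assms(1,2) in auto)

lemma C_const_eqI:
  assumes "t > 0"
    and "\<And>y. \<forall>i<t. y i \<in> {0..<int n} \<Longrightarrow> \<exists>i j. i < j \<and> j \<le> t \<and> weighted_zero_sum n A y {i..<j}"
    and "\<forall>i<t - 1. y i \<in> {0..<int n}"
    and "\<And>i j. i < j \<Longrightarrow> j \<le> t - 1 \<Longrightarrow> \<not> weighted_zero_sum n A y {i..<j}"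
  shows "C_const A n = t"
  unfolding C_const_def
proof (rule Least_equality)
  fix s
  assume s: "0 < s \<and> (\<forall>y. (\<forall>i<s. y i \<in> {0..<int n}) \<longrightarrow>
      (\<exists>i j. i < j \<and> j \<le> s \<and> weighted_zero_sum n A y {i..<j}))"
  show "t \<le> s"
  proof (rule ccontr)
    assume "\<not> t \<le> s"
    then have "\<forall>i<s. y i \<in> {0..<int n}" using assms(3) by auto
    then obtain i j where "i < j" "j \<le> s" "weighted_zero_sum n A y {i..<j}"
      using s by blast
    then show False using assms(4)[of i j] \<open>\<not> t \<le> s\<close> by simp
  qed
qed (use assms(1,2) in auto)

lemma D_const_C_const_eqI:
  assumes "t > 0"
    and "\<And>y. \<exists>i j. i < j \<and> j \<le> t \<and> weighted_zero_sum n A y {i..<j}"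
    and "\<forall>i<t - 1. y i \<in> {0..<int n}"
    and "\<And>I. I \<subseteq> {..<t - 1} \<Longrightarrow> I \<noteq> {} \<Longrightarrow> \<not> weighted_zero_sum n A y I"
  shows "D_const A n = t \<and> C_const A n = t"
proof
  show "D_const A n = t"
  proof (rule D_const_eqI[OF assms(1) _ assms(3,4)])
    fix z
    obtain i j where "i < j" "j \<le> t" "weighted_zero_sum n A z {i..<j}" using assms(2) by blast
    then show "\<exists>I. I \<subseteq> {..<t} \<and> I \<noteq> {} \<and> weighted_zero_sum n A z I"
      by (intro exI[of _ "{i..<j}"]) auto
  qed
  show "C_const A n = t"
  proof (rule C_const_eqI[OF assms(1) _ assms(3)])
    fix i j
    assume "i < j" "j \<le> t - 1"
    then show "\<not> weighted_zero_sum n A y {i..<j}"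
      using assms(4)[of "{i..<j}"] by (auto simp: subset_eq)
  qed (use assms(2) in blast)
qed

theorem mainTheorem9:
  fixes n :: nat
  assumes "n > 0" and "even n" and "\<exists>m::nat. n = m^2"
  shows "D_const (sq_set_star n) n = 4 \<and> C_const (sq_set_star n) n = 4"
proof -
  obtain m where n: "n = m^2" using assms(3) by blast
  then have m: "m > 0" "even m" using assms(1,2) by auto
  obtain Y where Y: "anisotropic_mod Y 3 (int m)"
    using exists_anisotropic_ternary_form[OF m(1)] by blast
  show ?thesis
  proof (rule D_const_C_const_eqI[where y = "\<lambda>i. Y i mod int n"])
    show "\<exists>i j. i < j \<and> j \<le> 4 \<and> weighted_zero_sum n (sq_set_star n) z {i..<j}" for z
      using exists_consecutive_weighted_zero_sum[OF m(2,1) n] by blast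
    show "\<not> weighted_zero_sum n (sq_set_star n) (\<lambda>i. Y i mod int n) I"
      if "I \<subseteq> {..<4 - 1}" "I \<noteq> {}" for I
      using no_weighted_zero_sum_of_anisotropic[OF Y n] that by simp
  qed (use assms(1) in auto)
qed

end
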